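(* Let $N=\{1,\dots,n\}$, let $w:2^N\to\mathbb{R}$ be the characteristic function of the data sharing game (with $w(\emptyset)=0$), let $\epsilon\ge 0$, and let $(\pi_0,\pi_1,\dots,\pi_n)$ be any vector in the strong $\epsilon$-core $$\mathrm{Core}_\epsilon(N)=\Big\{(\pi_0,\dots,\pi_n)\in\mathbb{R}^{n+1}_{+}:\ \sum_{i\in N}\pi_i+\pi_0=w(N),\ \sum_{i\in S}\pi_i+\pi_0\ge w(S)-\epsilon\ \text{for all } S\in 2^N\setminus\{\emptyset\}\Big\}.$$ Then for every $i\in N$, $\pi_i\le \pi_i^{VCG}+\epsilon$, where $\pi_i^{VCG}=w(N)-w(N\setminus\{i\})$.
   Context: Data sharing game: participants $N=\{1,\dots,n\}$ with (input) datasets $\hat D_i$, and a server $0$ with budget $b_0$. $F$ maps a collection of datasets to a global model, $A$ is an accuracy metric, $h_i=k_iA$ with $k_i>0$, and $v_i(M,\hat D_i)=\mathbb{E}[\max\{h_i(M)-h_i(F(\hat D_i)),0\}]$. The characteristic function is $w(S)=\sum_{i\in S}v_i(F(\hat D_S),\hat D_i)+b_0$ for nonempty $S\subseteq N$ (where $\hat D_S=\{\hat D_i\}_{i\in S}$) and $w(\emptyset)=0$. $\pi_i^{VCG}$ is called the VCG surplus of participant $i$. *)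

theory Defs
  imports "HOL-Probability.Probability"
begin

text \<open>A collection of datasets {D_i}_{i in S} is represented as a partial map
  (Some (D i) for i in S, None otherwise). The (possibly randomized) training
  procedure F returns a distribution over models.\<close>

definition datasets_of :: "(nat \<Rightarrow> 'd) \<Rightarrow> nat set \<Rightarrow> (nat \<Rightarrow> 'd option)" where
  "datasets_of D S = (\<lambda>j. if j \<in> S then Some (D j) else None)"

definition valuation ::
  "((nat \<Rightarrow> 'd option) \<Rightarrow> 'm pmf) \<Rightarrow> ('m \<Rightarrow> real) \<Rightarrow> (nat \<Rightarrow> real) \<Rightarrow> (nat \<Rightarrow> 'd)
    \<Rightarrow> nat \<Rightarrow> 'm pmf \<Rightarrow> real" where
  "valuation F A k D i M =
     measure_pmf.expectation (pair_pmf M (F (datasets_of D {i})))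
       (\<lambda>(m, m'). max (k i * A m - k i * A m') 0)"

definition char_fun ::
  "((nat \<Rightarrow> 'd option) \<Rightarrow> 'm pmf) \<Rightarrow> ('m \<Rightarrow> real) \<Rightarrow> (nat \<Rightarrow> real) \<Rightarrow> (nat \<Rightarrow> 'd)
    \<Rightarrow> real \<Rightarrow> nat set \<Rightarrow> real" where
  "char_fun F A k D b0 S =
     (if S = {} then 0
      else (\<Sum>i\<in>S. valuation F A k D i (F (datasets_of D S))) + b0)"

definition eps_core :: "nat \<Rightarrow> (nat set \<Rightarrow> real) \<Rightarrow> real \<Rightarrow> (nat \<Rightarrow> real) set" where
  "eps_core n w \<epsilon> = {\<pi>. (\<forall>i\<in>{0..n}. \<pi> i \<ge> 0)
      \<and> (\<Sum>i\<in>{1..n}. \<pi> i) + \<pi> 0 = w {1..n}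
      \<and> (\<forall>S. S \<subseteq> {1..n} \<and> S \<noteq> {} \<longrightarrow> (\<Sum>i\<in>S. \<pi> i) + \<pi> 0 \<ge> w S - \<epsilon>)}"

definition vcg_surplus :: "nat \<Rightarrow> (nat set \<Rightarrow> real) \<Rightarrow> nat \<Rightarrow> real" where
  "vcg_surplus n w i = w {1..n} - w ({1..n} - {i})"

end

theory Submission
  imports Defs
begin

text \<open>Budget balance gives \<open>\<pi> i = w N - (\<Sum>j\<in>N - {i}. \<pi> j) - \<pi> 0\<close>, and the core
  constraint for the coalition \<open>N - {i}\<close> bounds the subtracted terms below by
  \<open>w (N - {i}) - \<epsilon>\<close>. The only property of the data sharing game used is \<open>w {} = 0\<close>, which together with \<open>\<pi> 0 \<ge> 0\<close> and
  \<open>\<epsilon> \<ge> 0\<close> covers the case \<open>N = {i}\<close>.\<close>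

lemma eps_core_coalition_bound:
  assumes "\<pi> \<in> eps_core n w \<epsilon>" "w {} = 0" "\<epsilon> \<ge> 0" "S \<subseteq> {1..n}"
  shows "(\<Sum>j\<in>S. \<pi> j) + \<pi> 0 \<ge> w S - \<epsilon>"
proof (cases "S = {}")
  case True
  have "\<pi> 0 \<ge> 0" using assms(1) by (simp add: eps_core_def)
  then show ?thesis using True assms(2,3) by simp
next
  case False
  then show ?thesis using assms(1,4) by (simp add: eps_core_def)
qed

lemma eps_core_le_vcg_surplus:
  assumes "\<pi> \<in> eps_core n w \<epsilon>" "w {} = 0" "\<epsilon> \<ge> 0" "i \<in> {1..n}"
  shows "\<pi> i \<le> vcg_surplus n w i + \<epsilon>"
proof -
  have balance: "(\<Sum>j\<in>{1..n}. \<pi> j) + \<pi> 0 = w {1..n}"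
    using assms(1) by (simp add: eps_core_def)
  have split: "(\<Sum>j\<in>{1..n}. \<pi> j) = \<pi> i + (\<Sum>j\<in>{1..n} - {i}. \<pi> j)"
    using assms(4) by (simp add: sum.remove)
  have "(\<Sum>j\<in>{1..n} - {i}. \<pi> j) + \<pi> 0 \<ge> w ({1..n} - {i}) - \<epsilon>"
    using eps_core_coalition_bound[OF assms(1-3)] by blast
  then show ?thesis
    using balance split by (simp add: vcg_surplus_def)
qed

lemma char_fun_empty: "char_fun F A k D b0 {} = 0"
  by (simp add: char_fun_def)

theorem lemma1:
  fixes n :: nat and F :: "(nat \<Rightarrow> 'd option) \<Rightarrow> 'm pmf" and A :: "'m \<Rightarrow> real"
    and k :: "nat \<Rightarrow> real" and D :: "nat \<Rightarrow> 'd" and b0 :: real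
    and \<epsilon> :: real and \<pi> :: "nat \<Rightarrow> real"
  assumes "\<forall>i\<in>{1..n}. k i > 0"
    and "\<epsilon> \<ge> 0"
    and "\<pi> \<in> eps_core n (char_fun F A k D b0) \<epsilon>"
  shows "\<forall>i\<in>{1..n}. \<pi> i \<le> vcg_surplus n (char_fun F A k D b0) i + \<epsilon>"
  using eps_core_le_vcg_surplus[OF assms(3) char_fun_empty assms(2)] by blast

end
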